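(* Let $f\colon G\to G$ and $g\colon G'\to G'$ be continuous maps of graphs, and let $E\subseteq G$ be a closed set with $f(E)\subseteq E$. Suppose $\varphi\colon G\to G'$ is a semi-conjugacy between $f$ and $g$ which is an almost conjugacy between $f|_E$ and $g$. If $g$ is an irrational rotation of the circle (so $G'$ is a circle), then $f$ has no scrambled pair.
   Context: A graph is a non-degenerate compact connected metric space containing a finite subset $V$ such that each connected component of the complement of $V$ is homeomorphic to an open interval. A continuous map $\varphi\colon G\to G'$ is a semi-conjugacy between $f$ and $g$ if $\varphi$ is onto and $\varphi\circ f=g\circ\varphi$. If $E\subseteq G$ is closed with $f(E)\subseteq E$, such a semi-conjugacy is an almost conjugacy between $f|_E$ and $g$ if: $\varphi(E)=G'$; for every $y\in G'$, $\varphi^{-1}(y)$ is connected; for every $y\in G'$, $\varphi^{-1}(y)\cap E=\partial\varphi^{-1}(y)$ (boundary in $G$); and there is $N\ge1$ such that $\varphi^{-1}(y)\cap E$ has at most $N$ elements for every $y\in G'$. A pair $(x,y)$ is scrambled if $\liminf_{n\to\infty}d(f^n(x),f^n(y))=0$ and $\limsup_{n\to\infty}d(f^n(x),f^n(y))>0$. *)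

theory Defs
  imports "HOL-Analysis.Analysis"
begin

definition is_graph :: "'a::metric_space set \<Rightarrow> bool" where
  "is_graph G \<longleftrightarrow> compact G \<and> connected G \<and> (\<exists>a b. a \<in> G \<and> b \<in> G \<and> a \<noteq> b) \<and>
     (\<exists>V. finite V \<and> V \<subseteq> G \<and>
        (\<forall>C \<in> components (G - V). C homeomorphic {0<..<(1::real)}))"

definition semi_conjugacy ::
  "'a::metric_space set \<Rightarrow> ('a \<Rightarrow> 'a) \<Rightarrow> 'b::metric_space set \<Rightarrow> ('b \<Rightarrow> 'b) \<Rightarrow> ('a \<Rightarrow> 'b) \<Rightarrow> bool" where
  "semi_conjugacy G f G' g \<phi> \<longleftrightarrow> continuous_on G \<phi> \<and> \<phi> ` G = G' \<and> (\<forall>x\<in>G. \<phi> (f x) = g (\<phi> x))"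

definition almost_conjugacy ::
  "'a::metric_space set \<Rightarrow> ('a \<Rightarrow> 'a) \<Rightarrow> 'a set \<Rightarrow> 'b::metric_space set \<Rightarrow> ('b \<Rightarrow> 'b) \<Rightarrow> ('a \<Rightarrow> 'b) \<Rightarrow> bool" where
  "almost_conjugacy G f E G' g \<phi> \<longleftrightarrow> semi_conjugacy G f G' g \<phi> \<and>
     \<phi> ` E = G' \<and>
     (\<forall>y\<in>G'. connected {x\<in>G. \<phi> x = y}) \<and>
     (\<forall>y\<in>G'. {x\<in>G. \<phi> x = y} \<inter> E = (top_of_set G) frontier_of {x\<in>G. \<phi> x = y}) \<and>
     (\<exists>N::nat. N \<ge> 1 \<and> (\<forall>y\<in>G'. finite ({x\<in>G. \<phi> x = y} \<inter> E) \<and> card ({x\<in>G. \<phi> x = y} \<inter> E) \<le> N))"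

definition scrambled_pair :: "('a::metric_space \<Rightarrow> 'a) \<Rightarrow> 'a \<Rightarrow> 'a \<Rightarrow> bool" where
  "scrambled_pair f x y \<longleftrightarrow>
     liminf (\<lambda>n. ereal (dist ((f ^^ n) x) ((f ^^ n) y))) = 0 \<and>
     limsup (\<lambda>n. ereal (dist ((f ^^ n) x) ((f ^^ n) y))) > 0"

definition irrational_rotation :: "'b::metric_space set \<Rightarrow> ('b \<Rightarrow> 'b) \<Rightarrow> bool" where
  "irrational_rotation G' g \<longleftrightarrow>
     (\<exists>h k (\<alpha>::real). homeomorphism G' (sphere (0::complex) 1) h k \<and> \<alpha> \<notin> \<rat> \<and>
        (\<forall>x\<in>G'. h (g x) = cis (2 * pi * \<alpha>) * h x))"

end

theory Submission
  imports Defs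
begin

text \<open>
  Composing \<open>\<phi>\<close> with the homeomorphism onto the unit circle gives a map \<open>\<psi>\<close> with connected
  fibres which semi-conjugates \<open>f\<close> to multiplication by \<open>c = cis (2\<pi>\<alpha>)\<close>; of the almost
  conjugacy nothing else is needed. If \<open>\<psi> x \<noteq> \<psi> y\<close>, the points \<open>\<psi> (f\<^sup>n x)\<close> and \<open>\<psi> (f\<^sup>n y)\<close>
  keep a constant positive distance, so by uniform continuity of \<open>\<psi>\<close> the orbits stay apart.
  If \<open>\<psi> x = \<psi> y\<close>, then \<open>f\<^sup>n x\<close> and \<open>f\<^sup>n y\<close> lie in the fibre over \<open>c\<^sup>n \<psi> x\<close>, and these points are
  pairwise distinct since \<open>\<alpha>\<close> is irrational. A fibre over a point outside the finite set
  \<open>\<psi> V\<close> is contained in one edge of \<open>G\<close>, and only finitely many edges are not mapped into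
  \<open>\<psi> V\<close>: the image of such an edge contains an arc of the circle issuing from the image of an
  end vertex, and two edges sharing vertex and direction would share a fibre. Hence infinitely
  many of the fibres lie in a single edge \<open>\<cong> (0,1)\<close>, where pairwise disjoint connected sets
  must shrink to points, so \<open>dist (f\<^sup>n x) (f\<^sup>n y) \<longrightarrow> 0\<close>.
\<close>

section \<open>Arcs of the unit circle\<close>

lemma inj_on_cis_arc:
  assumes "c \<noteq> 0" "s \<in> {1, -1}" "\<delta> \<le> pi"
  shows "inj_on (\<lambda>t. c * cis (s * t)) {0<..<\<delta>}"
proof
  fix t1 t2 assume t: "t1 \<in> {0<..<\<delta>}" "t2 \<in> {0<..<\<delta>}" "c * cis (s * t1) = c * cis (s * t2)"
  have "s * t1 \<in> {-pi<..pi}" "s * t2 \<in> {-pi<..pi}" using t(1,2) assms(2,3) by auto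
  then have "s * t1 = s * t2" using t(3) assms(1) by (metis Arg_cis mult_cancel_left)
  then show "t1 = t2" using assms(2) by auto
qed

lemma arc_not_subset_finite:
  assumes "c \<noteq> 0" "s \<in> {1, -1}" "0 < \<delta>" "\<delta> \<le> pi" "finite F"
  obtains t where "t \<in> {0<..<\<delta>}" "c * cis (s * t) \<notin> F"
proof -
  have "infinite ((\<lambda>t. c * cis (s * t)) ` {0<..<\<delta>})"
    using finite_imageD inj_on_cis_arc[OF assms(1-2,4)] infinite_Ioo assms(3) by blast
  then show thesis using that assms(5) by (metis finite_subset image_subsetI)
qed

lemma connected_circle_subset_contains_arc_avoiding:
  assumes T: "T \<subseteq> sphere (0::complex) 1" "-1 \<notin> T" "connected T" "c \<in> T" "w \<in> T" "w \<noteq> c"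
  obtains \<delta> s where "0 < \<delta>" "\<delta> \<le> pi" "s \<in> {1, -1}" "\<forall>t\<in>{0<..<\<delta>}. c * cis (s * t) \<in> T"
proof -
  have T_nonpos: "T \<subseteq> - \<real>\<^sub>\<le>\<^sub>0"
  proof
    fix z assume "z \<in> T"
    show "z \<in> - \<real>\<^sub>\<le>\<^sub>0"
    proof
      assume "z \<in> \<real>\<^sub>\<le>\<^sub>0"
      then obtain r where "z = of_real r" "r \<le> 0" by (auto elim: nonpos_Reals_cases)
      moreover have "norm z = 1" using \<open>z \<in> T\<close> T(1) by auto
      ultimately show False using \<open>z \<in> T\<close> T(2) by auto
    qed
  qed
  have cis_Arg_T: "cis (Arg z) = z" if "z \<in> T" for z
  proof -
    have "norm z = 1" using that T(1) by auto
    then show ?thesis using cis_Arg[of z] by (force simp: sgn_div_norm)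
  qed
  have conn: "connected (Arg ` T)"
    using connected_continuous_image[OF continuous_on_subset[OF continuous_on_Arg T_nonpos] T(3)] .
  have "Arg w \<noteq> Arg c" using cis_Arg_T T(4-6) by metis
  define s :: real where "s = sgn (Arg w - Arg c)"
  define \<delta> where "\<delta> = min \<bar>Arg w - Arg c\<bar> pi"
  have "c * cis (s * t) \<in> T" if t: "t \<in> {0<..<\<delta>}" for t
  proof -
    have "Arg c + s * t \<in> closed_segment (Arg c) (Arg w)"
      using t \<open>Arg w \<noteq> Arg c\<close> by (auto simp: s_def \<delta>_def closed_segment_eq_real_ivl sgn_if)
    then have "Arg c + s * t \<in> Arg ` T"
      using closed_segment_subset[of "Arg c" "Arg ` T" "Arg w"] conn T(4,5) connected_convex_1 by blast
    then obtain z where "z \<in> T" "Arg z = Arg c + s * t" by auto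
    then show ?thesis using cis_Arg_T T(4) by (metis cis_mult)
  qed
  moreover have "0 < \<delta>" "\<delta> \<le> pi" "s \<in> {1, -1}" using \<open>Arg w \<noteq> Arg c\<close> by (auto simp: \<delta>_def s_def sgn_if)
  ultimately show thesis using that by blast
qed

lemma connected_circle_subset_contains_arc:
  assumes T: "T \<subseteq> sphere (0::complex) 1" "connected T" "c \<in> T" "w \<in> T" "w \<noteq> c"
  obtains \<delta> s where "0 < \<delta>" "\<delta> \<le> pi" "s \<in> {1, -1}" "\<forall>t\<in>{0<..<\<delta>}. c * cis (s * t) \<in> T"
proof (cases "T = sphere 0 1")
  case True
  then have "\<forall>t\<in>{0<..<pi}. c * cis t \<in> T" using T(3) by (auto simp: norm_mult)
  then show thesis using that[of pi 1] by auto
next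
  case False
  then obtain r where r: "norm r = 1" "r \<notin> T" using T(1) by fastforce
  \<comment> \<open>multiplying by \<open>\<rho>\<close> moves the gap \<open>r\<close> of \<open>T\<close> to the branch cut of \<open>Arg\<close>\<close>
  define \<rho> where "\<rho> = - cnj r"
  have "\<rho> * r = -1" using r(1) by (simp add: \<rho>_def complex_norm_square[symmetric] mult.commute)
  then have \<rho>: "\<rho> \<noteq> 0" "norm \<rho> = 1" using r(1) by (auto simp: \<rho>_def)
  have "(*) \<rho> ` T \<subseteq> sphere 0 1" using T(1) \<rho>(2) by (auto simp: norm_mult)
  moreover have "-1 \<notin> (*) \<rho> ` T" using \<open>\<rho> * r = -1\<close> \<rho>(1) r(2) by auto
  moreover have "connected ((*) \<rho> ` T)" by (intro connected_continuous_image T(2) continuous_intros)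
  moreover have "\<rho> * c \<in> (*) \<rho> ` T" "\<rho> * w \<in> (*) \<rho> ` T" "\<rho> * w \<noteq> \<rho> * c" using T(3-5) \<rho>(1) by auto
  ultimately obtain \<delta> s where "0 < \<delta>" "\<delta> \<le> pi" "s \<in> {1, -1}"
      "\<forall>t\<in>{0<..<\<delta>}. \<rho> * c * cis (s * t) \<in> (*) \<rho> ` T"
    by (rule connected_circle_subset_contains_arc_avoiding)
  moreover have "z \<in> T" if "\<rho> * z \<in> (*) \<rho> ` T" for z using that \<rho>(1) by auto
  ultimately show thesis using that by (metis mult.assoc)
qed

section \<open>Edges of a graph and a map to the circle with connected fibres\<close>

lemma closure_component_Diff_subset:
  assumes "closed G" "C \<in> components (G - V)"
  shows "closure C - V \<subseteq> C"
proof -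
  obtain Z where Z: "closed Z" "C = (G - V) \<inter> Z"
    using closedin_component[OF assms(2)] unfolding closedin_closed by blast
  have "closure C \<subseteq> G \<inter> Z"
    using Z assms(1) by (intro closure_minimal) auto
  then show ?thesis using Z(2) by auto
qed

lemma closure_component_subset:
  assumes "closed G" "C \<in> components (G - V)"
  shows "closure C \<subseteq> G"
proof -
  have "C \<subseteq> G" using in_components_subset[OF assms(2)] by blast
  then show ?thesis by (rule closure_minimal[OF _ assms(1)])
qed

lemma compact_closure_component:
  fixes G :: "'a::metric_space set"
  assumes "compact G" "C \<in> components (G - V)"
  shows "compact (closure C)"
proof -
  have "G \<inter> closure C = closure C"
    using closure_component_subset[OF compact_imp_closed[OF assms(1)] assms(2)] by blast
  then show ?thesis using compact_Int_closed[OF assms(1) closed_closure, of C] by simp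
qed

lemma arc_component_closure_meets:
  fixes G :: "'a::metric_space set"
  assumes "compact G" "C \<in> components (G - V)" "C homeomorphic {0<..<(1::real)}"
  obtains v where "v \<in> V" "v \<in> closure C"
proof (rule ccontr)
  assume "\<not> thesis"
  then have "closure C \<subseteq> C"
    using closure_component_Diff_subset[OF compact_imp_closed[OF assms(1)] assms(2)] that by blast
  then have "compact (G \<inter> C)" using compact_Int_closed[OF assms(1)] closure_subset_eq by blast
  moreover have "G \<inter> C = C" using assms(2) in_components_subset by blast
  ultimately have "compact C" by simp
  then have "closed {0<..<(1::real)}" using homeomorphic_compactness[OF assms(3)] compact_imp_closed by blast
  then have "closure {0<..<(1::real)} = {0<..<1}" by (rule closure_closed)
  moreover have "(0::real) \<in> closure {0<..<1}" by simp
  ultimately have "(0::real) \<in> {0<..<1}" by (simp only:)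
  then show False by simp
qed

lemma fibre_subset_component:
  assumes "connected {x\<in>G. \<psi> x = z}" "z \<notin> \<psi> ` V"
    and "C \<in> components (G - V)" "p \<in> C" "\<psi> p = z"
  shows "{x\<in>G. \<psi> x = z} \<subseteq> C"
proof (rule components_maximal[OF assms(3,1)])
  show "{x\<in>G. \<psi> x = z} \<subseteq> G - V" using assms(2) by auto
  show "C \<inter> {x\<in>G. \<psi> x = z} \<noteq> {}" using assms(3-5) in_components_subset by fastforce
qed

lemma component_image_contains_arc:
  fixes G :: "'a::metric_space set" and \<psi> :: "'a \<Rightarrow> complex"
  assumes "compact G" "continuous_on G \<psi>" "\<psi> ` G \<subseteq> sphere 0 1"
    and C: "C \<in> components (G - V)" "C homeomorphic {0<..<(1::real)}"
    and p: "p \<in> C" "\<psi> p \<notin> \<psi> ` V"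
  obtains v \<delta> s where "v \<in> V" "0 < \<delta>" "\<delta> \<le> pi" "s \<in> {1, -1}"
    "\<forall>t\<in>{0<..<\<delta>}. \<psi> v * cis (s * t) \<in> \<psi> ` closure C"
proof -
  obtain v where v: "v \<in> V" "v \<in> closure C" using arc_component_closure_meets[OF assms(1) C] .
  have clG: "closure C \<subseteq> G" by (rule closure_component_subset[OF compact_imp_closed[OF assms(1)] C(1)])
  have "\<psi> ` closure C \<subseteq> sphere 0 1" using clG assms(3) by blast
  moreover have "connected (\<psi> ` closure C)"
    by (rule connected_continuous_image[OF continuous_on_subset[OF assms(2) clG]
          connected_imp_connected_closure[OF in_components_connected[OF C(1)]]])
  moreover have "\<psi> v \<in> \<psi> ` closure C" "\<psi> p \<in> \<psi> ` closure C" "\<psi> p \<noteq> \<psi> v"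
    using v p closure_subset by auto
  ultimately obtain \<delta> s where "0 < \<delta>" "\<delta> \<le> pi" "s \<in> {1, -1}"
      "\<forall>t\<in>{0<..<\<delta>}. \<psi> v * cis (s * t) \<in> \<psi> ` closure C"
    by (rule connected_circle_subset_contains_arc)
  then show thesis using that v(1) by blast
qed

lemma components_eq_if_images_share_arc:
  fixes G :: "'a::metric_space set" and \<psi> :: "'a \<Rightarrow> complex"
  assumes G: "closed G" "finite V"
    and fibres: "\<And>z. connected {x\<in>G. \<psi> x = z}"
    and C12: "C1 \<in> components (G - V)" "C2 \<in> components (G - V)"
    and arc: "c \<noteq> 0" "s \<in> {1, -1}" "0 < \<delta>" "\<delta> \<le> pi"
      "\<forall>t\<in>{0<..<\<delta>}. c * cis (s * t) \<in> \<psi> ` closure C1 \<inter> \<psi> ` closure C2"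
  shows "C1 = C2"
proof -
  obtain t where t: "t \<in> {0<..<\<delta>}" "c * cis (s * t) \<notin> \<psi> ` V"
    using arc_not_subset_finite[OF arc(1-4) finite_imageI[OF G(2)]] by blast
  define q where "q = c * cis (s * t)"
  have q: "q \<notin> \<psi> ` V" using t(2) unfolding q_def .
  have "q \<in> \<psi> ` closure C1" "q \<in> \<psi> ` closure C2" using arc(5) t(1) unfolding q_def by auto
  then obtain p1 p2 where p: "p1 \<in> closure C1" "p2 \<in> closure C2" "\<psi> p1 = q" "\<psi> p2 = q" by (metis imageE)
  then have "p1 \<notin> V" "p2 \<notin> V" using q by (metis image_eqI)+
  then have "p1 \<in> C1" "p2 \<in> C2" using p(1,2) closure_component_Diff_subset[OF G(1)] C12 by blast+
  moreover have "p2 \<in> G" using \<open>p2 \<in> C2\<close> C12(2) in_components_subset by blast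
  ultimately have "p2 \<in> C1 \<inter> C2"
    using fibre_subset_component[OF fibres q C12(1) \<open>p1 \<in> C1\<close> p(3)] p(4) by blast
  then show "C1 = C2" using components_nonoverlap[OF C12] by blast
qed

lemma finite_components_not_mapped_into_vertex_image:
  fixes G :: "'a::metric_space set" and \<psi> :: "'a \<Rightarrow> complex"
  assumes G: "compact G" "finite V" "V \<subseteq> G"
    and arcs: "\<forall>C \<in> components (G - V). C homeomorphic {0<..<(1::real)}"
    and \<psi>: "continuous_on G \<psi>" "\<psi> ` G \<subseteq> sphere 0 1"
    and fibres: "\<And>z. connected {x\<in>G. \<psi> x = z}"
  shows "finite {C \<in> components (G - V). \<not> \<psi> ` C \<subseteq> \<psi> ` V}"
proof -
  define Cs where "Cs = {C \<in> components (G - V). \<not> \<psi> ` C \<subseteq> \<psi> ` V}"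
  define arc_at where "arc_at C v s \<delta> \<longleftrightarrow> v \<in> V \<and> s \<in> {1, -1::real} \<and> 0 < \<delta> \<and> \<delta> \<le> pi \<and>
      (\<forall>t\<in>{0<..<\<delta>}. \<psi> v * cis (s * t) \<in> \<psi> ` closure C)" for C v s \<delta>
  have "\<exists>v s \<delta>. arc_at C v s \<delta>" if C: "C \<in> Cs" for C
  proof -
    obtain p where "p \<in> C" "\<psi> p \<notin> \<psi> ` V" using C unfolding Cs_def by blast
    moreover have "C \<in> components (G - V)" "C homeomorphic {0<..<(1::real)}" using C arcs by (auto simp: Cs_def)
    ultimately obtain v \<delta> s where "v \<in> V" "0 < \<delta>" "\<delta> \<le> pi" "s \<in> {1, -1}"
        "\<forall>t\<in>{0<..<\<delta>}. \<psi> v * cis (s * t) \<in> \<psi> ` closure C"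
      using component_image_contains_arc[OF G(1) \<psi>] by blast
    then show ?thesis unfolding arc_at_def by blast
  qed
  then obtain v s \<delta> where arc: "\<And>C. C \<in> Cs \<Longrightarrow> arc_at C (v C) (s C) (\<delta> C)" by metis
  \<comment> \<open>an edge is determined by the end vertex and the direction of the arc in its image\<close>
  have "inj_on (\<lambda>C. (v C, s C)) Cs"
  proof (rule inj_onI)
    fix C1 C2 assume C12: "C1 \<in> Cs" "C2 \<in> Cs" "(v C1, s C1) = (v C2, s C2)"
    have "v C1 \<in> V" "s C1 \<in> {1, -1}" "0 < min (\<delta> C1) (\<delta> C2)" "min (\<delta> C1) (\<delta> C2) \<le> pi"
        "\<forall>t\<in>{0<..<min (\<delta> C1) (\<delta> C2)}. \<psi> (v C1) * cis (s C1 * t) \<in> \<psi> ` closure C1 \<inter> \<psi> ` closure C2"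
      using arc[OF C12(1)] arc[OF C12(2)] C12(3) unfolding arc_at_def by auto
    moreover have "\<psi> (v C1) \<noteq> 0" using \<open>v C1 \<in> V\<close> G(3) \<psi>(2) by fastforce
    moreover have "C1 \<in> components (G - V)" "C2 \<in> components (G - V)" using C12 by (auto simp: Cs_def)
    ultimately show "C1 = C2"
      using components_eq_if_images_share_arc[OF compact_imp_closed[OF G(1)] G(2) fibres] by blast
  qed
  moreover have "(\<lambda>C. (v C, s C)) ` Cs \<subseteq> V \<times> {1, -1}" using arc unfolding arc_at_def by auto
  ultimately have "finite Cs" by (rule inj_on_finite) (simp add: G(2))
  then show ?thesis unfolding Cs_def .
qed

section \<open>Pairwise disjoint connected subsets of an edge\<close>

lemma decseq_continua_finite_Inter_eq:
  fixes K :: "nat \<Rightarrow> 'a::metric_space set"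
  assumes K: "decseq K" "\<And>n. compact (K n)" "\<And>n. connected (K n)" "finite (\<Inter>(range K))"
    and ab: "a \<in> \<Inter>(range K)" "b \<in> \<Inter>(range K)"
  shows "a = b"
proof (rule ccontr)
  assume "a \<noteq> b"
  then have "infinite {0<..<dist a b}" by simp
  then obtain \<rho> where \<rho>: "\<rho> \<in> {0<..<dist a b}" "\<rho> \<notin> dist a ` \<Inter>(range K)"
    using K(4) by (meson finite_imageI finite_subset subsetI)
  \<comment> \<open>a limit of points of \<open>K n\<close> at distance \<open>\<rho>\<close> from \<open>a\<close> would lie in \<open>\<Inter>(range K)\<close>\<close>
  have "\<exists>p \<in> K n. dist a p = \<rho>" for n
  proof -
    have "connected (dist a ` K n)" by (intro connected_continuous_image K(3) continuous_intros)
    moreover have "dist a a \<in> dist a ` K n" "dist a b \<in> dist a ` K n" using ab by auto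
    ultimately have "\<rho> \<in> dist a ` K n"
      using \<rho>(1) unfolding connected_iff_interval by (metis dist_self greaterThanLessThan_iff less_imp_le)
    then show ?thesis by blast
  qed
  then obtain P where P: "\<And>n. P n \<in> K n" "\<And>n. dist a (P n) = \<rho>" by metis
  have "P n \<in> K 0" for n using P(1) decseqD[OF K(1), of 0 n] by auto
  then obtain p \<sigma> where p: "strict_mono \<sigma>" "(P \<circ> \<sigma>) \<longlonglongrightarrow> p"
    by (rule seq_compactE[OF compact_imp_seq_compact[OF K(2)] allI])
  have "p \<in> K m" for m
  proof (rule Lim_in_closed_set[OF compact_imp_closed[OF K(2)] _ _ p(2)])
    have "P (\<sigma> n) \<in> K m" if "m \<le> n" for n
      using P(1) decseqD[OF K(1)] seq_suble[OF p(1), of n] that by (meson le_trans subsetD)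
    then show "\<forall>\<^sub>F n in sequentially. (P \<circ> \<sigma>) n \<in> K m" by (auto simp: eventually_sequentially)
  qed simp
  moreover have "dist a p = \<rho>"
    using tendsto_dist[OF tendsto_const p(2), of a] P(2) by (simp add: o_def LIMSEQ_const_iff)
  ultimately show False using \<rho>(2) by auto
qed

lemma homeomorphism_closure_image_ball_dist_le:
  fixes hC :: "'a::metric_space \<Rightarrow> 'b::metric_space"
  assumes hom: "homeomorphism C T hC hinv" and p: "p \<in> C" "p \<in> closure (hinv ` (T \<inter> ball e \<delta>))"
  shows "dist (hC p) e \<le> \<delta>"
proof -
  obtain q where q: "\<And>j. q j \<in> hinv ` (T \<inter> ball e \<delta>)" "q \<longlonglongrightarrow> p"
    using p(2) unfolding closure_sequential by blast
  have "q j \<in> C" for j using q(1) homeomorphism_image2[OF hom] by blast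
  then have "(\<lambda>j. hC (q j)) \<longlonglongrightarrow> hC p"
    by (intro continuous_on_tendsto_compose[OF homeomorphism_cont1[OF hom] q(2) p(1)] always_eventually allI)
  then have lim: "(\<lambda>j. dist (hC (q j)) e) \<longlonglongrightarrow> dist (hC p) e" by (intro tendsto_dist tendsto_const)
  have bound: "dist (hC (q j)) e \<le> \<delta>" for j
  proof -
    obtain x where "x \<in> T" "dist e x < \<delta>" "q j = hinv x" using q(1)[of j] by auto
    then show ?thesis using homeomorphism_apply2[OF hom] by (simp add: dist_commute)
  qed
  show ?thesis by (rule LIMSEQ_le_const2[OF lim]) (use bound in blast)
qed

lemma limit_in_closure_image_ball:
  assumes "\<And>k. w k \<in> T" "w \<longlonglongrightarrow> e" "(\<lambda>k. g (w k)) \<longlonglongrightarrow> x" "0 < \<delta>"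
  shows "x \<in> closure (g ` (T \<inter> ball e \<delta>))"
proof (rule Lim_in_closed_set[OF closed_closure _ _ assms(3)])
  have "\<forall>\<^sub>F k in sequentially. dist (w k) e < \<delta>" using assms(2,4) by (rule tendstoD)
  then show "\<forall>\<^sub>F k in sequentially. g (w k) \<in> closure (g ` (T \<inter> ball e \<delta>))"
  proof eventually_elim
    case (elim k)
    then have "w k \<in> T \<inter> ball e \<delta>" using assms(1) by (simp add: dist_commute)
    then show ?case by (rule closure_subset[THEN subsetD, OF imageI])
  qed
qed simp

lemma arc_end_limit_unique:
  fixes C :: "'a::metric_space set" and e :: real
  assumes C: "compact (closure C)" "finite V" "closure C - V \<subseteq> C"
    and hom: "homeomorphism C {0<..<1} hC hinv"
    and e: "e \<notin> {0<..<1}"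
    and u: "\<And>k. u k \<in> {0<..<1}" "u \<longlonglongrightarrow> e" "(\<lambda>k. hinv (u k)) \<longlonglongrightarrow> a"
    and v: "\<And>k. v k \<in> {0<..<1}" "v \<longlonglongrightarrow> e" "(\<lambda>k. hinv (v k)) \<longlonglongrightarrow> b"
  shows "a = b"
proof -
  have hinv: "hinv ` {0<..<1} = C" "continuous_on {0<..<1} hinv"
    and hC: "hC ` C = {0<..<1}"
    using hom unfolding homeomorphism_def by auto
  \<comment> \<open>the closures of shrinking ends of the edge: nested continua whose intersection lies in \<open>V\<close>\<close>
  define K where "K n = closure (hinv ` ({0<..<1} \<inter> ball e (1 / Suc n)))" for n
  have "decseq K"
    unfolding K_def by (intro decseq_SucI closure_mono image_mono Int_mono subset_ball) (auto simp: frac_le)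
  have KC: "K n \<subseteq> closure C" for n
    unfolding K_def hinv(1)[symmetric] by (intro closure_mono image_mono) auto
  have "compact (closure C \<inter> K n)" for n
    unfolding K_def by (rule compact_Int_closed[OF C(1) closed_closure])
  then have compact: "compact (K n)" for n using KC by (simp add: Int_absorb1)
  have connected: "connected (K n)" for n
    unfolding K_def
    by (intro connected_imp_connected_closure connected_continuous_image convex_connected convex_Int
        continuous_on_subset[OF hinv(2)]) auto
  have limit_in_K: "x \<in> \<Inter>(range K)"
    if "\<And>k. w k \<in> {0<..<1}" "w \<longlonglongrightarrow> e" "(\<lambda>k. hinv (w k)) \<longlonglongrightarrow> x" for w x
    using limit_in_closure_image_ball[OF that] unfolding K_def by simp
  have "\<Inter>(range K) \<subseteq> V"
  proof
    fix p assume p: "p \<in> \<Inter>(range K)"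
    show "p \<in> V"
    proof (rule ccontr)
      assume "p \<notin> V"
      then have "p \<in> C" using p KC C(3) by blast
      then have "0 < dist (hC p) e" using hC(1) e by auto
      then obtain n where n: "1 / Suc n < dist (hC p) e" using nat_approx_posE by blast
      have "dist (hC p) e \<le> 1 / Suc n"
        using homeomorphism_closure_image_ball_dist_le[OF hom \<open>p \<in> C\<close>] p unfolding K_def by blast
      then show False using n by simp
    qed
  qed
  then have "finite (\<Inter>(range K))" using C(2) finite_subset by blast
  then show ?thesis
    by (rule decseq_continua_finite_Inter_eq[OF \<open>decseq K\<close> compact connected _ limit_in_K[OF u] limit_in_K[OF v]])
qed

lemma disjoint_connected_reals_limits_eq:
  fixes I :: "nat \<Rightarrow> real set"
  assumes I: "disjoint_family I" "\<And>k. connected (I k)"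
    and uv: "\<And>k. u k \<in> I k" "\<And>k. v k \<in> I k" "u \<longlonglongrightarrow> s" "v \<longlonglongrightarrow> t"
  shows "s = t"
proof (rule ccontr)
  assume "s \<noteq> t"
  define m where "m = (s + t) / 2"
  have "\<forall>\<^sub>F k in sequentially. dist (u k) s < \<bar>t - s\<bar> / 2 \<and> dist (v k) t < \<bar>t - s\<bar> / 2"
    using \<open>s \<noteq> t\<close> by (intro eventually_conj tendstoD uv) auto
  then obtain N where N: "\<And>k. N \<le> k \<Longrightarrow> \<bar>u k - s\<bar> < \<bar>t - s\<bar> / 2 \<and> \<bar>v k - t\<bar> < \<bar>t - s\<bar> / 2"
    unfolding eventually_sequentially dist_real_def by blast
  have "m \<in> closed_segment (u k) (v k)" if "N \<le> k" for k
    using N[OF that] unfolding m_def closed_segment_eq_real_ivl by (auto simp: abs_if split: if_splits)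
  then have "m \<in> I k" if "N \<le> k" for k
    using that closed_segment_subset[OF uv(1,2)] I(2) connected_convex_1 by blast
  then have "m \<in> I N \<inter> I (Suc N)" by simp
  moreover have "I N \<inter> I (Suc N) = {}" by (rule disjoint_family_onD[OF I(1)]) simp_all
  ultimately show False by blast
qed

lemma arc_limit_unique:
  fixes C :: "'a::metric_space set" and s :: real
  assumes C: "compact (closure C)" "finite V" "closure C - V \<subseteq> C"
    and hom: "homeomorphism C {0<..<1} hC hinv"
    and u: "\<And>k. u k \<in> {0<..<1}" "u \<longlonglongrightarrow> s" "(\<lambda>k. hinv (u k)) \<longlonglongrightarrow> a"
    and v: "\<And>k. v k \<in> {0<..<1}" "v \<longlonglongrightarrow> s" "(\<lambda>k. hinv (v k)) \<longlonglongrightarrow> b"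
  shows "a = b"
proof (cases "s \<in> {0<..<1}")
  case True
  have "(\<lambda>k. hinv (u k)) \<longlonglongrightarrow> hinv s" "(\<lambda>k. hinv (v k)) \<longlonglongrightarrow> hinv s"
    by (intro continuous_on_tendsto_compose[OF homeomorphism_cont2[OF hom] _ True] always_eventually allI
        u(1,2) v(1,2))+
  then show ?thesis using LIMSEQ_unique[OF u(3)] LIMSEQ_unique[OF v(3)] by simp
next
  case False
  show ?thesis by (rule arc_end_limit_unique[OF C hom False u v])
qed

lemma compact_Times_common_subseq:
  fixes x :: "nat \<Rightarrow> 'a::metric_space" and y :: "nat \<Rightarrow> 'b::metric_space"
  assumes "compact S" "compact T" "\<And>k. x k \<in> S" "\<And>k. y k \<in> T"
  obtains \<sigma> :: "nat \<Rightarrow> nat" and l m where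
    "strict_mono \<sigma>" "(\<lambda>k. x (\<sigma> k)) \<longlonglongrightarrow> l" "(\<lambda>k. y (\<sigma> k)) \<longlonglongrightarrow> m"
proof -
  have "\<forall>k. (x k, y k) \<in> S \<times> T" using assms(3,4) by simp
  obtain p and \<sigma> :: "nat \<Rightarrow> nat" where "p \<in> S \<times> T" "strict_mono \<sigma>" "((\<lambda>k. (x k, y k)) \<circ> \<sigma>) \<longlonglongrightarrow> p"
    by (rule seq_compactE[OF compact_imp_seq_compact[OF compact_Times[OF assms(1,2)]] \<open>\<forall>k. (x k, y k) \<in> S \<times> T\<close>])
  then show thesis using that tendsto_fst tendsto_snd unfolding o_def by fastforce
qed

lemma disjoint_family_inj_on_image_subseq:
  fixes F :: "'i \<Rightarrow> 'a set" and \<sigma> :: "'j \<Rightarrow> 'i"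
  assumes "inj_on h C" "disjoint_family F" "\<And>k. F k \<subseteq> C" "inj \<sigma>"
  shows "disjoint_family (\<lambda>k. h ` F (\<sigma> k))"
  unfolding disjoint_family_on_def
proof (intro ballI impI)
  fix i j :: 'j assume "i \<noteq> j"
  then have "F (\<sigma> i) \<inter> F (\<sigma> j) = {}" using assms(2,4) unfolding disjoint_family_on_def inj_def by blast
  moreover have "h ` F (\<sigma> i) \<inter> h ` F (\<sigma> j) = h ` (F (\<sigma> i) \<inter> F (\<sigma> j))"
    by (rule inj_on_image_Int[OF assms(1,3,3), symmetric])
  ultimately show "h ` F (\<sigma> i) \<inter> h ` F (\<sigma> j) = {}" by simp
qed

lemma disjoint_connected_subsets_of_arc_not_separated:
  fixes C :: "'a::metric_space set" and F :: "nat \<Rightarrow> 'a set"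
  assumes C: "compact (closure C)" "finite V" "closure C - V \<subseteq> C" "C homeomorphic {0<..<(1::real)}"
    and F: "disjoint_family F" "\<And>k. connected (F k)" "\<And>k. F k \<subseteq> C"
    and ab: "\<And>k. a k \<in> F k" "\<And>k. b k \<in> F k"
    and sep: "0 < \<epsilon>" "\<And>k. \<epsilon> \<le> dist (a k) (b k)"
  shows False
proof -
  obtain hC :: "'a \<Rightarrow> real" and hinv where hom: "homeomorphism C {0<..<1} hC hinv"
    using C(4) homeomorphic_def by blast
  have hC: "hC ` C = {0<..<1}" "continuous_on C hC" "\<And>x. x \<in> C \<Longrightarrow> hinv (hC x) = x"
    using hom unfolding homeomorphism_def by auto
  have "inj_on hC C" using inj_on_inverseI homeomorphism_apply1[OF hom] by metis
  define u where "u k = hC (a k)" for k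
  define v where "v k = hC (b k)" for k
  have aC: "a k \<in> C" "b k \<in> C" for k using ab F(3) by blast+
  then have uv: "u k \<in> {0<..<1}" "v k \<in> {0<..<1}" "a k = hinv (u k)" "b k = hinv (v k)" for k
    using hC(1,3) unfolding u_def v_def by auto
  have "compact (closure C \<times> closure C)" by (rule compact_Times[OF C(1) C(1)])
  moreover have "compact ({0..1::real} \<times> {0..1::real})" by (intro compact_Times compact_Icc)
  moreover have "(a k, b k) \<in> closure C \<times> closure C" "(u k, v k) \<in> {0..1} \<times> {0..1}" for k
    using aC uv(1,2) by (auto simp: less_imp_le intro: closure_subset[THEN subsetD])
  ultimately obtain \<sigma> :: "nat \<Rightarrow> nat" and AB st where \<sigma>: "strict_mono \<sigma>"
    and lim: "(\<lambda>k. (a (\<sigma> k), b (\<sigma> k))) \<longlonglongrightarrow> AB" "(\<lambda>k. (u (\<sigma> k), v (\<sigma> k))) \<longlonglongrightarrow> st"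
    by (rule compact_Times_common_subseq)
  obtain A B s t where "AB = (A, B)" "st = (s, t)" by fastforce
  then have A: "(\<lambda>k. a (\<sigma> k)) \<longlonglongrightarrow> A" and B: "(\<lambda>k. b (\<sigma> k)) \<longlonglongrightarrow> B"
    and u: "(\<lambda>k. u (\<sigma> k)) \<longlonglongrightarrow> s" and v: "(\<lambda>k. v (\<sigma> k)) \<longlonglongrightarrow> t"
    using tendsto_fst[OF lim(1)] tendsto_snd[OF lim(1)] tendsto_fst[OF lim(2)] tendsto_snd[OF lim(2)] by simp_all
  have "\<epsilon> \<le> dist A B" by (rule LIMSEQ_le_const[OF tendsto_dist[OF A B]]) (use sep(2) in blast)
  then have "A \<noteq> B" using sep(1) by auto
  have disj: "disjoint_family (\<lambda>k. hC ` F (\<sigma> k))"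
    by (rule disjoint_family_inj_on_image_subseq[OF \<open>inj_on hC C\<close> F(1,3) strict_mono_imp_inj_on[OF \<sigma>]])
  have "connected (hC ` F k)" for k
    using connected_continuous_image[OF continuous_on_subset[OF hC(2) F(3)] F(2)] .
  moreover have "u (\<sigma> k) \<in> hC ` F (\<sigma> k)" "v (\<sigma> k) \<in> hC ` F (\<sigma> k)" for k
    using ab unfolding u_def v_def by blast+
  ultimately have "s = t" by (rule disjoint_connected_reals_limits_eq[OF disj _ _ _ u v])
  have "A = B"
    by (rule arc_limit_unique[OF C(1-3) hom uv(1) u _ uv(2)]) (use A B v \<open>s = t\<close> in \<open>simp_all add: uv(3,4)\<close>)
  then show False using \<open>A \<noteq> B\<close> by simp
qed

lemma not_tendsto_zero_infinite_ge:
  fixes X :: "nat \<Rightarrow> real"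
  assumes "\<not> X \<longlonglongrightarrow> 0" "\<And>k. 0 \<le> X k"
  obtains \<epsilon> where "0 < \<epsilon>" "infinite {k. \<epsilon> \<le> X k}"
proof -
  obtain \<epsilon> where "0 < \<epsilon>" "\<forall>N. \<exists>k\<ge>N. \<epsilon> \<le> X k"
    using assms unfolding LIMSEQ_iff by (auto simp: not_less)
  then show thesis using that unfolding infinite_nat_iff_unbounded_le by blast
qed

lemma infinitely_many_fibres_in_one_component:
  fixes G :: "'a::metric_space set" and \<psi> :: "'a \<Rightarrow> complex"
  assumes G: "compact G" "finite V" "V \<subseteq> G"
    and arcs: "\<forall>C \<in> components (G - V). C homeomorphic {0<..<(1::real)}"
    and \<psi>: "continuous_on G \<psi>" "\<psi> ` G \<subseteq> sphere 0 1"
    and fibres: "\<And>z. connected {x\<in>G. \<psi> x = z}"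
    and S: "infinite S" and a: "\<And>k. a k \<in> G" "\<And>k. \<psi> (a k) = w k" and w: "\<And>k. k \<in> S \<Longrightarrow> w k \<notin> \<psi> ` V"
  obtains C0 and r :: "nat \<Rightarrow> nat" where "C0 \<in> components (G - V)" "strict_mono r" "\<And>n. r n \<in> S"
    "\<And>n. {x\<in>G. \<psi> x = w (r n)} \<subseteq> C0"
proof -
  define comp where "comp k = connected_component_set (G - V) (a k)" for k
  have comp: "comp k \<in> {C \<in> components (G - V). \<not> \<psi> ` C \<subseteq> \<psi> ` V}" "{x\<in>G. \<psi> x = w k} \<subseteq> comp k"
    if "k \<in> S" for k
  proof -
    have "a k \<in> G - V" using a w[OF that] by (metis DiffI image_eqI)
    then have "comp k \<in> components (G - V)" "a k \<in> comp k"
      unfolding comp_def by (auto intro: componentsI)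
    then show "comp k \<in> {C \<in> components (G - V). \<not> \<psi> ` C \<subseteq> \<psi> ` V}"
      using w[OF that] a(2) by auto
    show "{x\<in>G. \<psi> x = w k} \<subseteq> comp k"
      by (rule fibre_subset_component[OF fibres w[OF that] \<open>comp k \<in> components (G - V)\<close>
            \<open>a k \<in> comp k\<close> a(2)])
  qed
  have "finite (comp ` S)"
    using finite_subset[OF _ finite_components_not_mapped_into_vertex_image[OF G arcs \<psi> fibres]] comp(1) by blast
  then obtain k0 where "k0 \<in> S" "infinite {k \<in> S. comp k = comp k0}"
    using pigeonhole_infinite[OF S] by blast
  then obtain r :: "nat \<Rightarrow> nat" where "strict_mono r" "\<And>n. r n \<in> S" "\<And>n. comp (r n) = comp k0"
    using infinite_enumerate by blast
  moreover have "comp k0 \<in> components (G - V)" using comp(1)[OF \<open>k0 \<in> S\<close>] by blast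
  ultimately show thesis using that comp(2) by metis
qed

lemma fibres_distance_tendsto_zero:
  fixes G :: "'a::metric_space set" and \<psi> :: "'a \<Rightarrow> complex" and w :: "nat \<Rightarrow> complex"
  assumes G: "compact G" "finite V" "V \<subseteq> G"
    and arcs: "\<forall>C \<in> components (G - V). C homeomorphic {0<..<(1::real)}"
    and \<psi>: "continuous_on G \<psi>" "\<psi> ` G \<subseteq> sphere 0 1"
    and fibres: "\<And>z. connected {x\<in>G. \<psi> x = z}"
    and ab: "\<And>k. a k \<in> G" "\<And>k. b k \<in> G" "\<And>k. \<psi> (a k) = w k" "\<And>k. \<psi> (b k) = w k"
    and w: "inj w"
  shows "(\<lambda>k. dist (a k) (b k)) \<longlonglongrightarrow> 0"
proof (rule ccontr)
  assume "\<not> ?thesis"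
  then obtain \<epsilon> where \<epsilon>: "0 < \<epsilon>" "infinite {k. \<epsilon> \<le> dist (a k) (b k)}"
    using not_tendsto_zero_infinite_ge by (metis zero_le_dist)
  define S where "S = {k. \<epsilon> \<le> dist (a k) (b k)} - w -` (\<psi> ` V)"
  have "finite (w -` (\<psi> ` V))" using G(2) w by (intro finite_vimageI) auto
  then have "infinite S" using \<epsilon>(2) unfolding S_def by (rule Diff_infinite_finite)
  have S_avoids: "w k \<notin> \<psi> ` V" if "k \<in> S" for k using that unfolding S_def by simp
  obtain C0 and r :: "nat \<Rightarrow> nat" where C0: "C0 \<in> components (G - V)" and r: "strict_mono r" "\<And>n. r n \<in> S"
    and fibres_C0: "\<And>n. {x\<in>G. \<psi> x = w (r n)} \<subseteq> C0"
    by (rule infinitely_many_fibres_in_one_component[OF G arcs \<psi> fibres \<open>infinite S\<close>, where a = a and w = w])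
      (use ab(1,3) S_avoids in auto)
  show False
  proof (rule disjoint_connected_subsets_of_arc_not_separated)
    show "compact (closure C0)" by (rule compact_closure_component[OF G(1) C0])
    show "finite V" by fact
    show "closure C0 - V \<subseteq> C0" by (rule closure_component_Diff_subset[OF compact_imp_closed[OF G(1)] C0])
    show "C0 homeomorphic {0<..<(1::real)}" using C0 arcs by blast
    show "disjoint_family (\<lambda>n. {x\<in>G. \<psi> x = w (r n)})"
      using inj_eq[OF w] strict_mono_eq[OF r(1)] unfolding disjoint_family_on_def by auto
    show "connected {x\<in>G. \<psi> x = w (r n)}" "{x\<in>G. \<psi> x = w (r n)} \<subseteq> C0" for n
      using fibres fibres_C0 by auto
    show "a (r n) \<in> {x\<in>G. \<psi> x = w (r n)}" "b (r n) \<in> {x\<in>G. \<psi> x = w (r n)}" for n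
      using ab by auto
    show "0 < \<epsilon>" "\<epsilon> \<le> dist (a (r n)) (b (r n))" for n using \<epsilon>(1) r(2) unfolding S_def by auto
  qed
qed

section \<open>Orbits\<close>

lemma inj_power_cis_irrational:
  assumes "\<alpha> \<notin> \<rat>"
  shows "inj (\<lambda>n::nat. cis (2 * pi * \<alpha>) ^ n)"
proof
  fix m n :: nat assume "cis (2 * pi * \<alpha>) ^ m = cis (2 * pi * \<alpha>) ^ n"
  then have "cis (real m * (2 * pi * \<alpha>)) = cis (real n * (2 * pi * \<alpha>))" by (metis Complex.DeMoivre)
  then have "cis (real m * (2 * pi * \<alpha>)) / cis (real n * (2 * pi * \<alpha>)) = 1" by simp
  then have "cos (real m * (2 * pi * \<alpha>) - real n * (2 * pi * \<alpha>)) = 1"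
    by (metis cis_divide cis.sel(1) one_complex.sel(1))
  then obtain j :: int where "real m * (2 * pi * \<alpha>) - real n * (2 * pi * \<alpha>) = real_of_int j * 2 * pi"
    using cos_one_2pi_int by blast
  then have "2 * pi * (\<alpha> * (real m - real n)) = 2 * pi * j" by (simp add: algebra_simps)
  then have j: "\<alpha> * (real m - real n) = j" by simp
  show "m = n"
  proof (rule ccontr)
    assume "m \<noteq> n"
    then have "\<alpha> = j / (real m - real n)" using j by (simp add: field_simps)
    also have "\<dots> \<in> \<rat>" by (intro Rats_divide Rats_diff) auto
    finally show False using assms by simp
  qed
qed

lemma funpow_semiconj_mult:
  fixes c :: "'b::monoid_mult"
  assumes "f ` G \<subseteq> G" "\<And>x. x \<in> G \<Longrightarrow> \<psi> (f x) = c * \<psi> x" "x \<in> G"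
  shows "(f ^^ n) x \<in> G \<and> \<psi> ((f ^^ n) x) = c ^ n * \<psi> x"
  by (induction n) (use assms in \<open>auto simp: mult.assoc\<close>)

lemma not_scrambled_if_dist_bounded_below:
  assumes "0 < \<eta>" "\<And>n. \<eta> \<le> dist ((f ^^ n) x) ((f ^^ n) y)"
  shows "\<not> scrambled_pair f x y"
proof -
  have "ereal \<eta> \<le> liminf (\<lambda>n. ereal (dist ((f ^^ n) x) ((f ^^ n) y)))"
    by (intro Liminf_bounded always_eventually allI) (simp add: assms(2))
  then show ?thesis using assms(1) unfolding scrambled_pair_def by (auto simp: zero_ereal_def)
qed

lemma not_scrambled_if_dist_tendsto_zero:
  assumes "(\<lambda>n. dist ((f ^^ n) x) ((f ^^ n) y)) \<longlonglongrightarrow> 0"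
  shows "\<not> scrambled_pair f x y"
proof -
  have "limsup (\<lambda>n. ereal (dist ((f ^^ n) x) ((f ^^ n) y))) = ereal 0"
    by (intro lim_imp_Limsup tendsto_ereal assms) simp
  then show ?thesis unfolding scrambled_pair_def by (simp add: zero_ereal_def)
qed

lemma dist_bounded_below_if_images_equidistant:
  fixes \<psi> :: "'a::metric_space \<Rightarrow> 'b::metric_space"
  assumes "compact G" "continuous_on G \<psi>" "\<And>n. x n \<in> G" "\<And>n. y n \<in> G"
    and "0 < d" "\<And>n. dist (\<psi> (x n)) (\<psi> (y n)) = d"
  obtains \<eta> where "0 < \<eta>" "\<And>n. \<eta> \<le> dist (x n) (y n)"
proof -
  have "uniformly_continuous_on G \<psi>" using assms(1,2) compact_uniformly_continuous by blast
  then obtain \<eta> where "0 < \<eta>" and \<eta>: "\<forall>p\<in>G. \<forall>q\<in>G. dist q p < \<eta> \<longrightarrow> dist (\<psi> q) (\<psi> p) < d"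
    unfolding uniformly_continuous_on_def using assms(5) by blast
  have "\<eta> \<le> dist (x n) (y n)" for n
    using \<eta> assms(3,4,6)[of n] by (metis dist_commute less_irrefl not_le)
  then show thesis using that \<open>0 < \<eta>\<close> by blast
qed

lemma connected_fibres_homeomorphism_compose:
  assumes hom: "homeomorphism S T h k" and "\<phi> ` G \<subseteq> S" and fibres: "\<forall>y\<in>S. connected {x\<in>G. \<phi> x = y}"
  shows "connected {x\<in>G. h (\<phi> x) = z}"
proof (cases "z \<in> T")
  case True
  have "{x\<in>G. h (\<phi> x) = z} = {x\<in>G. \<phi> x = k z}"
    using assms(2) True homeomorphism_apply1[OF hom] homeomorphism_apply2[OF hom] by force
  moreover have "k z \<in> S" using True hom homeomorphism_image2 by blast
  ultimately show ?thesis using fibres by simp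
next
  case False
  then have "{x\<in>G. h (\<phi> x) = z} = {}" using assms(2) homeomorphism_image1[OF hom] by blast
  then show ?thesis by (metis connected_empty)
qed

lemma no_scrambled_pair_over_irrational_rotation:
  fixes G :: "'a::metric_space set" and \<psi> :: "'a \<Rightarrow> complex"
  assumes G: "compact G" "finite V" "V \<subseteq> G"
    and arcs: "\<forall>C \<in> components (G - V). C homeomorphic {0<..<(1::real)}"
    and \<psi>: "continuous_on G \<psi>" "\<psi> ` G \<subseteq> sphere 0 1"
    and fibres: "\<And>z. connected {x\<in>G. \<psi> x = z}"
    and f: "f ` G \<subseteq> G" "\<And>x. x \<in> G \<Longrightarrow> \<psi> (f x) = cis (2 * pi * \<alpha>) * \<psi> x"
    and \<alpha>: "\<alpha> \<notin> \<rat>" and xy: "x \<in> G" "y \<in> G"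
  shows "\<not> scrambled_pair f x y"
proof -
  define c where "c = cis (2 * pi * \<alpha>)"
  have orbit: "(f ^^ n) z \<in> G" "\<psi> ((f ^^ n) z) = c ^ n * \<psi> z" if "z \<in> G" for z n
    using funpow_semiconj_mult[where \<psi> = \<psi> and c = c, OF f(1) _ that] f(2) unfolding c_def by blast+
  show ?thesis
  proof (cases "\<psi> x = \<psi> y")
    case True
    have "\<psi> x \<noteq> 0" using \<psi>(2) xy(1) by auto
    then have orbit_inj: "inj (\<lambda>n. c ^ n * \<psi> x)"
      using inj_power_cis_irrational[OF \<alpha>] unfolding c_def inj_def by simp
    have "(\<lambda>n. dist ((f ^^ n) x) ((f ^^ n) y)) \<longlonglongrightarrow> 0"
      by (rule fibres_distance_tendsto_zero[OF G arcs \<psi> fibres _ _ _ _ orbit_inj]) (use orbit xy True in auto)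
    then show ?thesis by (rule not_scrambled_if_dist_tendsto_zero)
  next
    case False
    have equidistant: "dist (\<psi> ((f ^^ n) x)) (\<psi> ((f ^^ n) y)) = dist (\<psi> x) (\<psi> y)" for n
      using orbit xy by (simp add: dist_norm c_def norm_mult norm_power flip: right_diff_distrib)
    obtain \<eta> where "0 < \<eta>" "\<And>n. \<eta> \<le> dist ((f ^^ n) x) ((f ^^ n) y)"
      by (rule dist_bounded_below_if_images_equidistant[OF G(1) \<psi>(1),
            where x = "\<lambda>n. (f ^^ n) x" and y = "\<lambda>n. (f ^^ n) y"])
        (use orbit(1) xy equidistant False in auto)
    then show ?thesis by (rule not_scrambled_if_dist_bounded_below)
  qed
qed

theorem lemma3p1:
  fixes G :: "'a::metric_space set" and G' :: "'b::metric_space set"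
    and f :: "'a \<Rightarrow> 'a" and g :: "'b \<Rightarrow> 'b" and \<phi> :: "'a \<Rightarrow> 'b" and E :: "'a set"
  assumes "is_graph G" and "is_graph G'"
    and "continuous_on G f" and "f ` G \<subseteq> G"
    and "continuous_on G' g" and "g ` G' \<subseteq> G'"
    and "closed E" and "E \<subseteq> G" and "f ` E \<subseteq> E"
    and "semi_conjugacy G f G' g \<phi>"
    and "almost_conjugacy G f E G' g \<phi>"
    and "irrational_rotation G' g"
  shows "\<not> (\<exists>x\<in>G. \<exists>y\<in>G. scrambled_pair f x y)"
proof -
  obtain V where G: "compact G" "finite V" "V \<subseteq> G"
    and arcs: "\<forall>C \<in> components (G - V). C homeomorphic {0<..<(1::real)}"
    using assms(1) unfolding is_graph_def by blast
  have \<phi>: "continuous_on G \<phi>" "\<phi> ` G = G'" "\<And>x. x \<in> G \<Longrightarrow> \<phi> (f x) = g (\<phi> x)"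
    and fibres: "\<forall>y\<in>G'. connected {x\<in>G. \<phi> x = y}"
    using assms(10,11) unfolding almost_conjugacy_def semi_conjugacy_def by blast+
  obtain h k \<alpha> where hom: "homeomorphism G' (sphere (0::complex) 1) h k" and \<alpha>: "\<alpha> \<notin> \<rat>"
    and rot: "\<And>u. u \<in> G' \<Longrightarrow> h (g u) = cis (2 * pi * \<alpha>) * h u"
    using assms(12) unfolding irrational_rotation_def by blast
  have "\<not> scrambled_pair f x y" if "x \<in> G" "y \<in> G" for x y
  proof (rule no_scrambled_pair_over_irrational_rotation[OF G arcs, where \<psi> = "\<lambda>x. h (\<phi> x)"])
    show "continuous_on G (\<lambda>x. h (\<phi> x))"
      using continuous_on_compose2[OF homeomorphism_cont1[OF hom] \<phi>(1)] \<phi>(2) by blast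
    show "(\<lambda>x. h (\<phi> x)) ` G \<subseteq> sphere 0 1" using \<phi>(2) homeomorphism_image1[OF hom] by blast
    show "connected {x\<in>G. h (\<phi> x) = z}" for z
      using connected_fibres_homeomorphism_compose[OF hom _ fibres] \<phi>(2) by blast
    show "h (\<phi> (f x)) = cis (2 * pi * \<alpha>) * h (\<phi> x)" if "x \<in> G" for x
      using rot \<phi>(2,3) that by auto
  qed (use assms(4) \<alpha> that in auto)
  then show ?thesis by blast
qed

end
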